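(* Let a program execution be a finite sequence of heaps $h_0,h_1,\dots,h_n$, where $h_0$ is the initial heap in which the only allocated object is the special object $\mathit{Void}$, which is open, and each $h_{i+1}$ is obtained from $h_i$ by one elementary step: either allocating a fresh object, or updating a single attribute $x.a$ of an allocated object $x$ to a value $y$ (giving the heap $h_i[x.a\mapsto y]$). Every object $o$ has a class invariant $o.\mathit{inv}$, a Boolean expression evaluated in a heap. Consider a verification methodology $M$ whose proof obligations guarantee, for every step of every execution of a program that satisfies them: (a) every freshly allocated object is open; (b) whenever $x.\mathit{closed}$ is updated to $\mathit{True}$, $x.\mathit{inv}$ holds in the state before the step; (c) whenever an attribute $x.a$ with $a\neq\mathit{closed}$ is updated to some value $y$ in heap $h$, every object $o$ concerned with this update satisfies $(o.\mathit{closed}\wedge o.\mathit{inv})_h \Rightarrow (o.\mathit{inv})_{h[x.a\mapsto y]}$; (d) class invariants depend neither on the attribute $\mathit{closed}$ (of any object) nor on the allocation status of objects (so allocating a new object, or changing any $\mathit{closed}$ attribute, does not change the truth value of the invariant of any previously allocated object). Then every program that satisfies $M$'s proof obligations satisfies, in every heap of every execution, the property $$\forall o:\ o.\mathit{closed}\Rightarrow o.\mathit{inv} \qquad\text{(G1)}$$ (quantifying over allocated objects).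
   Context: Every object has a built-in Boolean ghost attribute $\mathit{closed}$; $o$ is open if $o.\mathit{closed}=\mathit{False}$. An object $o$ is concerned with an attribute $a$ of an object $x$ if updating $x.a$ might affect the truth value of $o$'s invariant; objects not concerned with an update keep the truth value of their invariant across it. *)

theory Defs
  imports Main
begin

text \<open>A heap over objects 'o, (ordinary) attributes 'a and values 'v:
  the set of allocated objects, the ghost Boolean attribute closed of every
  object, and the values of all other attributes.\<close>
record ('o, 'a, 'v) heap =
  alloc  :: "'o set"
  closed :: "'o \<Rightarrow> bool"
  fld    :: "'o \<Rightarrow> 'a \<Rightarrow> 'v"

datatype ('o, 'a, 'v) action =
    Alloc 'o
  | Update 'o 'a 'v
  | SetClosed 'o bool

definition heap_upd :: "('o,'a,'v) heap \<Rightarrow> 'o \<Rightarrow> 'a \<Rightarrow> 'v \<Rightarrow> ('o,'a,'v) heap" where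
  "heap_upd h x a y = h\<lparr>fld := (fld h)(x := (fld h x)(a := y))\<rparr>"

definition heap_set_closed :: "('o,'a,'v) heap \<Rightarrow> 'o \<Rightarrow> bool \<Rightarrow> ('o,'a,'v) heap" where
  "heap_set_closed h x b = h\<lparr>closed := (closed h)(x := b)\<rparr>"

fun estep :: "('o,'a,'v) heap \<Rightarrow> ('o,'a,'v) action \<Rightarrow> ('o,'a,'v) heap \<Rightarrow> bool" where
  "estep h (Alloc ob) h' \<longleftrightarrow>
     ob \<notin> alloc h \<and> alloc h' = insert ob (alloc h) \<and>
     (\<forall>p\<in>alloc h. closed h' p = closed h p \<and> fld h' p = fld h p)"
| "estep h (Update x a y) h' \<longleftrightarrow> x \<in> alloc h \<and> h' = heap_upd h x a y"
| "estep h (SetClosed x b) h' \<longleftrightarrow> x \<in> alloc h \<and> h' = heap_set_closed h x b"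

definition execution :: "'o \<Rightarrow> ('o,'a,'v) heap list \<Rightarrow> ('o,'a,'v) action list \<Rightarrow> bool" where
  "execution Void hs acts \<longleftrightarrow>
     hs \<noteq> [] \<and> length acts = length hs - 1 \<and>
     alloc (hs ! 0) = {Void} \<and> \<not> closed (hs ! 0) Void \<and>
     (\<forall>i < length acts. estep (hs ! i) (acts ! i) (hs ! Suc i))"

text \<open>"Concerned": objects not concerned with attribute a of x keep the truth
  value of their invariant across any update of x.a.\<close>
definition concerned_sound ::
  "('o \<Rightarrow> ('o,'a,'v) heap \<Rightarrow> bool) \<Rightarrow> ('o \<Rightarrow> 'o \<Rightarrow> 'a \<Rightarrow> bool) \<Rightarrow> bool" where
  "concerned_sound Inv concerned \<longleftrightarrow>
     (\<forall>h x a y ob. x \<in> alloc h \<longrightarrow> ob \<in> alloc h \<longrightarrow> \<not> concerned ob x a \<longrightarrow>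
        Inv ob (heap_upd h x a y) = Inv ob h)"

text \<open>The guarantees (a)-(d) of the methodology for one step h --act--> h'.\<close>
definition step_obligations ::
  "('o \<Rightarrow> ('o,'a,'v) heap \<Rightarrow> bool) \<Rightarrow> ('o \<Rightarrow> 'o \<Rightarrow> 'a \<Rightarrow> bool) \<Rightarrow>
   ('o,'a,'v) heap \<Rightarrow> ('o,'a,'v) action \<Rightarrow> ('o,'a,'v) heap \<Rightarrow> bool" where
  "step_obligations Inv concerned h act h' \<longleftrightarrow>
     (\<forall>ob. act = Alloc ob \<longrightarrow> \<not> closed h' ob) \<and>
     (\<forall>x. act = SetClosed x True \<longrightarrow> Inv x h) \<and>
     (\<forall>x a y. act = Update x a y \<longrightarrow>
        (\<forall>ob\<in>alloc h. concerned ob x a \<longrightarrow> closed h ob \<and> Inv ob h \<longrightarrow> Inv ob h')) \<and>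
     ((\<exists>ob. act = Alloc ob) \<or> (\<exists>x b. act = SetClosed x b) \<longrightarrow>
        (\<forall>p\<in>alloc h. Inv p h' = Inv p h))"

end

theory Submission
  imports Defs
begin

text \<open>G1 is an inductive invariant of single steps. A fresh object is open, so it
  imposes nothing. Updating an ordinary attribute preserves the invariant of every
  closed object: of the concerned ones by obligation (c), of the others by definition
  of being concerned. Changing closed or allocating preserves all invariants by (d),
  and an object that becomes closed had its invariant established by (b).\<close>

definition invariants_of_closed_hold :: "('o \<Rightarrow> ('o,'a,'v) heap \<Rightarrow> bool) \<Rightarrow> ('o,'a,'v) heap \<Rightarrow> bool" where
  "invariants_of_closed_hold Inv h \<longleftrightarrow> (\<forall>ob \<in> alloc h. closed h ob \<longrightarrow> Inv ob h)"

lemma invariants_of_closed_hold_initial: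
  assumes "alloc h = {Void}" and "\<not> closed h Void"
  shows "invariants_of_closed_hold Inv h"
  using assms by (simp add: invariants_of_closed_hold_def)

lemma invariants_of_closed_hold_Alloc:
  assumes "estep h (Alloc ob) h'" and "step_obligations Inv concerned h (Alloc ob) h'"
    and "invariants_of_closed_hold Inv h"
  shows "invariants_of_closed_hold Inv h'"
  using assms by (auto simp: invariants_of_closed_hold_def step_obligations_def)

lemma invariants_of_closed_hold_Update:
  assumes sound: "concerned_sound Inv concerned"
    and step: "estep h (Update x a y) h'"
    and obl: "step_obligations Inv concerned h (Update x a y) h'"
    and G1: "invariants_of_closed_hold Inv h"
  shows "invariants_of_closed_hold Inv h'"
  unfolding invariants_of_closed_hold_def
proof (intro ballI impI)
  fix p assume "p \<in> alloc h'" "closed h' p"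
  from step have h': "h' = heap_upd h x a y" and x: "x \<in> alloc h" by auto
  with \<open>p \<in> alloc h'\<close> \<open>closed h' p\<close> have p: "p \<in> alloc h" "closed h p"
    by (auto simp: heap_upd_def)
  with G1 have "Inv p h" by (simp add: invariants_of_closed_hold_def)
  show "Inv p h'"
  proof (cases "concerned p x a")
    case True
    with obl p \<open>Inv p h\<close> show ?thesis by (simp add: step_obligations_def)
  next
    case False
    with sound x p \<open>Inv p h\<close> h' show ?thesis by (simp add: concerned_sound_def)
  qed
qed

lemma invariants_of_closed_hold_SetClosed:
  assumes step: "estep h (SetClosed x b) h'"
    and obl: "step_obligations Inv concerned h (SetClosed x b) h'"
    and G1: "invariants_of_closed_hold Inv h"
  shows "invariants_of_closed_hold Inv h'"
  unfolding invariants_of_closed_hold_def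
proof (intro ballI impI)
  fix p assume "p \<in> alloc h'" "closed h' p"
  from step have h': "h' = heap_set_closed h x b" by simp
  with \<open>p \<in> alloc h'\<close> have p: "p \<in> alloc h" by (simp add: heap_set_closed_def)
  with obl have "Inv p h' = Inv p h" by (auto simp: step_obligations_def)
  moreover have "Inv p h"
  proof (cases "p = x")
    case True
    with h' \<open>closed h' p\<close> have b by (simp add: heap_set_closed_def)
    with obl True show ?thesis by (simp add: step_obligations_def)
  next
    case False
    with h' \<open>closed h' p\<close> have "closed h p" by (simp add: heap_set_closed_def)
    with G1 p show ?thesis by (simp add: invariants_of_closed_hold_def)
  qed
  ultimately show "Inv p h'" by simp
qed

lemma invariants_of_closed_hold_step:
  assumes "concerned_sound Inv concerned" and "estep h act h'"
    and "step_obligations Inv concerned h act h'" and "invariants_of_closed_hold Inv h"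
  shows "invariants_of_closed_hold Inv h'"
  using assms
  by (cases act)
    (blast intro: invariants_of_closed_hold_Alloc invariants_of_closed_hold_Update
       invariants_of_closed_hold_SetClosed)+

theorem lemma2:
  fixes Void :: 'o
    and Inv :: "'o \<Rightarrow> ('o,'a,'v) heap \<Rightarrow> bool"
    and concerned :: "'o \<Rightarrow> 'o \<Rightarrow> 'a \<Rightarrow> bool"
    and hs :: "('o,'a,'v) heap list"
    and acts :: "('o,'a,'v) action list"
  assumes "concerned_sound Inv concerned"
    and "execution Void hs acts"
    and "\<forall>i < length acts. step_obligations Inv concerned (hs ! i) (acts ! i) (hs ! Suc i)"
  shows "\<forall>i < length hs. \<forall>ob \<in> alloc (hs ! i). closed (hs ! i) ob \<longrightarrow> Inv ob (hs ! i)"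
proof (intro allI impI)
  fix i assume "i < length hs"
  then have "invariants_of_closed_hold Inv (hs ! i)"
  proof (induction i)
    case 0
    with assms(2) show ?case
      by (auto simp: execution_def intro: invariants_of_closed_hold_initial)
  next
    case (Suc i)
    with assms(2) have "i < length acts" and "estep (hs ! i) (acts ! i) (hs ! Suc i)"
      by (auto simp: execution_def)
    with Suc assms(1,3) show ?case by (auto intro: invariants_of_closed_hold_step)
  qed
  then show "\<forall>ob \<in> alloc (hs ! i). closed (hs ! i) ob \<longrightarrow> Inv ob (hs ! i)"
    by (simp add: invariants_of_closed_hold_def)
qed

end
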